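(* Let $C\subset\mathbb{R}^2$ be the closed disk with center $(a,b)$ and radius $r>0$, and for $i\in\mathbb{N}$ let $C_i$ be the closed disk with center $(ia,ib)$ and radius $ir$. Let $\tau_2$ be the extremal ray of $L_{\mathbb{Q}_{\geq}}(C\cap\mathbb{R}^2_{\geq})$ of smaller slope, and suppose $C\cap\tau_2$ is a single point. For each $i$ with $C_i\cap C_{i+1}\neq\emptyset$, let $P_i$ be the point of $C_i\cap C_{i+1}$ closest to $\tau_2$. Then $\lim_{i\to\infty}\mathrm{d}(P_i,\tau_2)=0$.
   Context: $\mathbb{N}=\{0,1,2,\dots\}$. For $A\subseteq\mathbb{R}^2_{\geq}$, $L_{\mathbb{Q}_{\geq}}(A)=\{\sum_{i=1}^p q_ia_i\mid p\in\mathbb{N},\ q_i\in\mathbb{Q}_{\geq},\ a_i\in A\}$ and its extremal rays are its two boundary half-lines from the origin. $\mathrm{d}(P,\tau_2)$ is the Euclidean distance from the point $P$ to the line $\tau_2$. *)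

theory Defs
  imports "HOL-Analysis.Analysis"
begin

text \<open>Points of the plane are modelled as real \<times> real; the product metric is Euclidean.\<close>

definition quadrant :: "(real \<times> real) set" where
  "quadrant = {p. 0 \<le> fst p \<and> 0 \<le> snd p}"

definition rat_cone :: "(real \<times> real) set \<Rightarrow> (real \<times> real) set" where
  "rat_cone A = {x. \<exists>(p::nat) q a. (\<forall>i<p. q i \<in> \<rat> \<and> 0 \<le> q i \<and> a i \<in> A)
                      \<and> x = (\<Sum>i<p. q i *\<^sub>R a i)}"

definition ray :: "real \<times> real \<Rightarrow> (real \<times> real) set" where
  "ray v = {t *\<^sub>R v | t. 0 \<le> t}"

definition line :: "real \<times> real \<Rightarrow> (real \<times> real) set" where
  "line v = {t *\<^sub>R v | t. True}"

definition extremal_ray :: "(real \<times> real) set \<Rightarrow> real \<times> real \<Rightarrow> bool" where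
  "extremal_ray K v \<longleftrightarrow> v \<noteq> 0 \<and> ray v \<subseteq> frontier K"

text \<open>The extremal ray of smaller slope (slopes compared via cross-multiplication,
  which is valid for directions in the closed first quadrant, including vertical ones).\<close>
definition smaller_slope_extremal_ray :: "(real \<times> real) set \<Rightarrow> real \<times> real \<Rightarrow> bool" where
  "smaller_slope_extremal_ray K v \<longleftrightarrow> extremal_ray K v \<and>
     (\<forall>w. extremal_ray K w \<longrightarrow> snd v * fst w \<le> snd w * fst v)"

definition scaled_disk :: "real \<Rightarrow> real \<Rightarrow> real \<Rightarrow> nat \<Rightarrow> (real \<times> real) set" where
  "scaled_disk a b r i = cball (real i * a, real i * b) (real i * r)"

end

theory Submission
  imports Defs
begin

text \<open>If the origin lies in \<open>C\<close>, it lies in every \<open>C\<^sub>i\<close> and on the line, so all distances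
  vanish. Otherwise the unique point \<open>x\<close> of \<open>C\<close> on the ray is a point of tangency: with
  \<open>d = c - x\<close> for the centre \<open>c\<close>, one has \<open>x \<bottom> d\<close> and \<open>|d| = r\<close>, because moving \<open>x\<close> along the
  ray in either direction must leave \<open>C\<close>. The disks \<open>C\<^sub>n\<close>, \<open>C\<^sub>n\<^sub>+\<^sub>1\<close> have centres \<open>n c\<close>, \<open>(n+1) c\<close>,
  and the point \<open>(n + 1/2) x + (h/r) d\<close>, at distance \<open>h\<close> from the line, lies in both as soon
  as \<open>|x|\<^sup>2/4 + h\<^sup>2 \<le> 2 h n r\<close>; so \<open>h = |x|\<^sup>2/(4 n r)\<close> works for large \<open>n\<close>.\<close>

lemma parabola_above_on_punctured_interval:
  fixes W R k N :: real
  assumes "N > 0" "W \<le> R"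
    and above: "\<And>s. s \<noteq> 0 \<Longrightarrow> \<bar>s\<bar> < 1 \<Longrightarrow> R < W - 2 * s * k + s\<^sup>2 * N"
  shows "k = 0 \<and> W = R"
proof -
  have k: "k = 0"
  proof (rule ccontr)
    assume "k \<noteq> 0"
    define s where "s = k / (N + \<bar>k\<bar>)"
    have "s \<noteq> 0" "\<bar>s\<bar> < 1"
      using \<open>k \<noteq> 0\<close> \<open>N > 0\<close> by (auto simp: s_def abs_div)
    have "s\<^sup>2 * N = s * k * (N / (N + \<bar>k\<bar>))"
      by (simp add: s_def power2_eq_square)
    also have "\<dots> < s * k"
    proof -
      have "0 < s * k"
        using \<open>k \<noteq> 0\<close> \<open>N > 0\<close> by (auto simp: s_def zero_less_mult_iff intro!: divide_pos_pos)
      moreover have "N / (N + \<bar>k\<bar>) < 1"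
        using \<open>k \<noteq> 0\<close> \<open>N > 0\<close> by simp
      ultimately show ?thesis
        by (metis mult.right_neutral mult_strict_left_mono)
    qed
    finally have "s\<^sup>2 * N < s * k" .
    moreover have "0 \<le> s\<^sup>2 * N"
      using \<open>N > 0\<close> by simp
    ultimately show False
      using above[OF \<open>s \<noteq> 0\<close> \<open>\<bar>s\<bar> < 1\<close>] \<open>W \<le> R\<close> by linarith
  qed
  moreover have "W = R"
  proof (rule ccontr)
    assume "W \<noteq> R"
    define s where "s = min (1/2) ((R - W) / N)"
    have "0 < s" "s < 1" "s * N \<le> R - W"
      using \<open>W \<noteq> R\<close> \<open>W \<le> R\<close> \<open>N > 0\<close> by (auto simp: s_def min_def pos_le_divide_eq)
    then have "s\<^sup>2 * N \<le> R - W"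
      using \<open>N > 0\<close> by (smt (verit) mult_right_mono mult_le_cancel_right2 power2_eq_square)
    then show False
      using above[of s] \<open>0 < s\<close> \<open>s < 1\<close> k by simp
  qed
  ultimately show ?thesis ..
qed

lemma norm_diff_scaleR_square:
  fixes x y :: "'a::real_inner"
  shows "(norm (y - s *\<^sub>R x))\<^sup>2 = (norm y)\<^sup>2 - 2 * s * inner x y + s\<^sup>2 * (norm x)\<^sup>2"
  unfolding power2_norm_eq_inner
  by (simp add: inner_diff_left inner_diff_right inner_commute power2_eq_square algebra_simps)

lemma cball_unique_ray_point_tangent:
  fixes c x :: "'a::real_inner"
  assumes x: "x \<in> cball c r" "x \<noteq> 0"
    and unique: "\<And>s. 0 < s \<Longrightarrow> s *\<^sub>R x \<in> cball c r \<Longrightarrow> s = 1"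
  shows "orthogonal x (c - x) \<and> norm (c - x) = r"
proof -
  have "0 \<le> r"
    using x(1) by (meson dist_not_less_zero mem_cball order_trans not_le)
  have "inner x (c - x) = 0 \<and> (norm (c - x))\<^sup>2 = r\<^sup>2"
  proof (rule parabola_above_on_punctured_interval)
    show "0 < (norm x)\<^sup>2"
      using x(2) by simp
    show "(norm (c - x))\<^sup>2 \<le> r\<^sup>2"
      using x(1) \<open>0 \<le> r\<close> by (simp add: dist_norm norm_minus_commute power_mono)
  next
    fix s :: real
    assume "s \<noteq> 0" "\<bar>s\<bar> < 1"
    then have "0 < 1 + s" "1 + s \<noteq> 1"
      by auto
    then have "(1 + s) *\<^sub>R x \<notin> cball c r"
      using unique by blast
    then have "r < norm ((c - x) - s *\<^sub>R x)"
      by (simp add: dist_norm algebra_simps)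
    then have "r\<^sup>2 < (norm ((c - x) - s *\<^sub>R x))\<^sup>2"
      using \<open>0 \<le> r\<close> by (simp add: power_strict_mono)
    then show "r\<^sup>2 < (norm (c - x))\<^sup>2 - 2 * s * inner x (c - x) + s\<^sup>2 * (norm x)\<^sup>2"
      by (simp only: norm_diff_scaleR_square)
  qed
  then show ?thesis
    using \<open>0 \<le> r\<close> by (simp add: orthogonal_def power2_eq_iff_nonneg)
qed

lemma orthogonal_offset_mem_cball:
  fixes x d :: "'a::real_inner"
  assumes "orthogonal x d" "norm d = r" "0 < r" "0 \<le> m"
    and "e\<^sup>2 * (norm x)\<^sup>2 + h\<^sup>2 \<le> 2 * h * m * r"
  shows "m *\<^sub>R (x + d) + e *\<^sub>R x + (h / r - m) *\<^sub>R d \<in> cball (m *\<^sub>R (x + d)) (m * r)"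
proof -
  have "h - m * r = (h / r - m) * r"
    using assms(3) by (simp add: field_simps)
  then have "(norm (e *\<^sub>R x + (h / r - m) *\<^sub>R d))\<^sup>2 = e\<^sup>2 * (norm x)\<^sup>2 + (h - m * r)\<^sup>2"
    using assms(1,2) by (simp add: norm_add_Pythagorean orthogonal_clauses power_mult_distrib)
  also have "\<dots> \<le> (m * r)\<^sup>2"
    using assms(5) by (simp add: power2_diff algebra_simps)
  finally have "norm (e *\<^sub>R x + (h / r - m) *\<^sub>R d) \<le> m * r"
    using assms(3,4) by (simp add: power2_le_iff_abs_le)
  then show ?thesis
    using dist_add_cancel[of "m *\<^sub>R (x + d)" 0 "e *\<^sub>R x + (h / r - m) *\<^sub>R d"]
    by (simp add: add.assoc)
qed

lemma lens_point_mem_cballs: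
  fixes x d :: "'a::real_inner"
  assumes "orthogonal x d" "norm d = r" "0 < r" "0 \<le> n" "0 \<le> h"
    and "(norm x)\<^sup>2 / 4 + h\<^sup>2 \<le> 2 * h * n * r"
  shows "(n + 1/2) *\<^sub>R x + (h / r) *\<^sub>R d
           \<in> cball (n *\<^sub>R (x + d)) (n * r) \<inter> cball ((n + 1) *\<^sub>R (x + d)) ((n + 1) * r)"
proof
  have "(n + 1/2) *\<^sub>R x + (h / r) *\<^sub>R d = n *\<^sub>R (x + d) + (1/2) *\<^sub>R x + (h / r - n) *\<^sub>R d"
    by (simp add: algebra_simps)
  also have "\<dots> \<in> cball (n *\<^sub>R (x + d)) (n * r)"
    using assms by (intro orthogonal_offset_mem_cball) (simp_all add: power_divide)
  finally show "(n + 1/2) *\<^sub>R x + (h / r) *\<^sub>R d \<in> cball (n *\<^sub>R (x + d)) (n * r)" .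
next
  have "(n + 1/2) *\<^sub>R x + (h / r) *\<^sub>R d
      = (n + 1) *\<^sub>R (x + d) + (- 1/2) *\<^sub>R x + (h / r - (n + 1)) *\<^sub>R d"
    by (simp add: algebra_simps) (metis scaleR_add_left scaleR_one field_sum_of_halves)
  also have "\<dots> \<in> cball ((n + 1) *\<^sub>R (x + d)) ((n + 1) * r)"
  proof (intro orthogonal_offset_mem_cball)
    have "0 \<le> 2 * h * r"
      using assms(3,5) by simp
    then show "(- 1/2)\<^sup>2 * (norm x)\<^sup>2 + h\<^sup>2 \<le> 2 * h * (n + 1) * r"
      using assms(6) by (simp add: power_divide algebra_simps)
  qed (use assms in auto)
  finally show "(n + 1/2) *\<^sub>R x + (h / r) *\<^sub>R d \<in> cball ((n + 1) *\<^sub>R (x + d)) ((n + 1) * r)" .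
qed

lemma scaled_disk_eq_cball: "scaled_disk a b r i = cball (real i *\<^sub>R (a, b)) (real i * r)"
  by (simp add: scaled_disk_def)

lemma zero_mem_scaled_disk:
  assumes "0 \<in> cball (a, b) r"
  shows "0 \<in> scaled_disk a b r i"
proof -
  have "norm (real i *\<^sub>R (a, b)) \<le> real i * r"
    using assms by (simp add: mult_left_mono del: scaleR_Pair)
  then show ?thesis
    by (simp add: scaled_disk_eq_cball del: scaleR_Pair)
qed

lemma scaleR_mem_ray: "x \<in> ray v \<Longrightarrow> 0 \<le> s \<Longrightarrow> s *\<^sub>R x \<in> ray v"
  by (auto simp: ray_def intro: exI[of _ "s * _"])

lemma ray_subset_line: "ray v \<subseteq> line v"
  by (auto simp: ray_def line_def)

lemma zero_mem_line: "0 \<in> line v"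
  unfolding line_def by (auto intro: exI[of _ 0])

lemma tangent_at_unique_ray_point:
  assumes x: "cball c r \<inter> ray v = {x}" and "0 \<notin> cball c r"
  shows "x \<in> ray v" "orthogonal x (c - x)" "norm (c - x) = r"
proof -
  have x_cball: "x \<in> cball c r" and x_ray: "x \<in> ray v"
    using x by blast+
  have "x \<noteq> 0"
    using x_cball assms(2) by blast
  have "s = 1" if "0 < s" "s *\<^sub>R x \<in> cball c r" for s
  proof -
    have "s *\<^sub>R x \<in> cball c r \<inter> ray v"
      using that scaleR_mem_ray[OF x_ray, of s] by simp
    then have "s *\<^sub>R x = x"
      using x by blast
    then show "s = 1"
      using \<open>x \<noteq> 0\<close> by (metis scaleR_cancel_right scaleR_one)
  qed
  then have "orthogonal x (c - x) \<and> norm (c - x) = r"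
    using cball_unique_ray_point_tangent[OF x_cball \<open>x \<noteq> 0\<close>] by blast
  with x_ray show "x \<in> ray v" "orthogonal x (c - x)" "norm (c - x) = r"
    by auto
qed

lemma scaled_disks_meet_near_line:
  assumes "x \<in> ray v" "orthogonal x ((a, b) - x)" "norm ((a, b) - x) = r" "0 < r"
    and "0 < n" "norm x \<le> 2 * real n * r"
  shows "\<exists>q \<in> scaled_disk a b r n \<inter> scaled_disk a b r (Suc n).
           infdist q (line v) \<le> (norm x)\<^sup>2 / (4 * real n * r)"
proof -
  define d where "d = (a, b) - x"
  define h where "h = (norm x)\<^sup>2 / (4 * real n * r)"
  define q where "q = (real n + 1/2) *\<^sub>R x + (h / r) *\<^sub>R d"
  have "0 \<le> h"
    using assms(4,5) by (simp add: h_def)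
  have "h = norm x * (norm x / (4 * real n * r))"
    by (simp add: h_def power2_eq_square)
  also have "\<dots> \<le> norm x * (1/2)"
    using assms(4-6) by (intro mult_left_mono) (simp_all add: pos_divide_le_eq mult_ac)
  finally have "h\<^sup>2 \<le> (norm x)\<^sup>2 / 4"
    using \<open>0 \<le> h\<close> power_mono[of h "norm x / 2" 2] by (simp add: power_divide)
  moreover have "2 * h * real n * r = (norm x)\<^sup>2 / 2"
    using assms(4,5) by (simp add: h_def)
  ultimately have "q \<in> scaled_disk a b r n \<inter> scaled_disk a b r (Suc n)"
    using lens_point_mem_cballs[of x d r "real n" h] assms(2-4) \<open>0 \<le> h\<close>
    by (simp add: q_def d_def scaled_disk_eq_cball add.commute del: scaleR_Pair)
  moreover have "(real n + 1/2) *\<^sub>R x \<in> line v"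
    using scaleR_mem_ray[OF assms(1), of "real n + 1/2"] ray_subset_line[of v] by auto
  then have "infdist q (line v) \<le> h"
    using infdist_le[of "(real n + 1/2) *\<^sub>R x" "line v" q] assms(3,4) \<open>0 \<le> h\<close>
    by (simp add: q_def d_def dist_norm)
  ultimately show ?thesis
    unfolding h_def by blast
qed

lemma eventually_scaled_disks_meet_near_line:
  assumes "x \<in> ray v" "orthogonal x ((a, b) - x)" "norm ((a, b) - x) = r" "0 < r"
  shows "\<forall>\<^sub>F n in sequentially. \<exists>q \<in> scaled_disk a b r n \<inter> scaled_disk a b r (Suc n).
           infdist q (line v) \<le> (norm x)\<^sup>2 / (4 * r) / real n"
proof -
  have "\<forall>\<^sub>F n in sequentially. norm x / (2 * r) \<le> real n"
    using filterlim_real_sequentially by (simp add: filterlim_at_top)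
  with eventually_gt_at_top[of 0]
  have "\<forall>\<^sub>F n in sequentially. 0 < n \<and> norm x \<le> 2 * real n * r"
    by eventually_elim (use assms(4) in \<open>simp add: pos_divide_le_eq mult_ac\<close>)
  then show ?thesis
  proof eventually_elim
    case (elim n)
    have "(norm x)\<^sup>2 / (4 * real n * r) = (norm x)\<^sup>2 / (4 * r) / real n"
      by (simp add: mult_ac)
    then show ?case
      using scaled_disks_meet_near_line[OF assms] elim by metis
  qed
qed

theorem lemma4p1:
  fixes a b r :: real and v :: "real \<times> real" and P :: "nat \<Rightarrow> real \<times> real"
  assumes "r > 0"
    and "smaller_slope_extremal_ray (rat_cone (cball (a, b) r \<inter> quadrant)) v"
    and "is_singleton (cball (a, b) r \<inter> ray v)"
    and "\<forall>i. scaled_disk a b r i \<inter> scaled_disk a b r (Suc i) \<noteq> {} \<longrightarrow>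
           P i \<in> scaled_disk a b r i \<inter> scaled_disk a b r (Suc i) \<and>
           (\<forall>q \<in> scaled_disk a b r i \<inter> scaled_disk a b r (Suc i).
               infdist (P i) (line v) \<le> infdist q (line v))"
  shows "(\<lambda>i. infdist (P i) (line v)) \<longlonglongrightarrow> 0"
proof (cases "0 \<in> cball (a, b) r")
  case True
  have "infdist (P i) (line v) \<le> infdist 0 (line v)" for i
    using assms(4) zero_mem_scaled_disk[OF True] by blast
  then have "infdist (P i) (line v) = 0" for i
    using infdist_zero[OF zero_mem_line] infdist_nonneg[of "P i"] by (simp add: order_antisym)
  then show ?thesis
    by simp
next
  case False
  obtain x where "cball (a, b) r \<inter> ray v = {x}"
    using assms(3) by (auto simp: is_singleton_def)
  from tangent_at_unique_ray_point[OF this False]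
  have "\<forall>\<^sub>F n in sequentially. \<exists>q \<in> scaled_disk a b r n \<inter> scaled_disk a b r (Suc n).
          infdist q (line v) \<le> (norm x)\<^sup>2 / (4 * r) / real n"
    using eventually_scaled_disks_meet_near_line assms(1) by blast
  then have "\<forall>\<^sub>F n in sequentially. infdist (P n) (line v) \<le> (norm x)\<^sup>2 / (4 * r) / real n"
  proof eventually_elim
    case (elim n)
    then obtain q where q: "q \<in> scaled_disk a b r n \<inter> scaled_disk a b r (Suc n)"
      "infdist q (line v) \<le> (norm x)\<^sup>2 / (4 * r) / real n"
      by blast
    then have "infdist (P n) (line v) \<le> infdist q (line v)"
      using assms(4) by blast
    with q(2) show ?case
      by linarith
  qed
  then show ?thesis
    by (rule tendsto_sandwich[rotated, OF _ tendsto_const lim_const_over_n]) (simp add: infdist_nonneg)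
qed

end
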